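(* Let $X,Y$ be metrizable spaces with $X$ nonempty. Suppose $X=S\cup D$ where $S,D$ are disjoint dense subsets of $X$, and $Y=P\cup Q$ where $P,Q$ are disjoint dense subsets of $Y$. Let $Z=(S\times P)\cup(D\times Q)\subseteq X\times Y$ with the subspace topology of the product. Then $f\colon Z\to Y$, $f(x,y)=y$, is a continuous open surjection (and hence a quotient map).
   Context: A surjection $f\colon Z\to Y$ is a quotient map if for every $G\subseteq Y$, $G$ is open in $Y$ iff $f^{-1}(G)$ is open in $Z$. *)

theory Defs
  imports "HOL-Analysis.Analysis"
begin

end

theory Submission
  imports Defs
begin

text \<open>Above every point y of Y the set Z has a dense fibre
(S or D, depending on whether y lies in P or Q). Hence every basic open box A \<times> B meeting Z
contains, over each v \<in> B, a point of Z, so snd maps open subsets of Z onto open subsets of Y;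
a continuous open surjection is a quotient map.\<close>

definition fibre_over :: "('a \<times> 'b) set \<Rightarrow> 'b \<Rightarrow> 'a set"
  where "fibre_over Z y = {x. (x, y) \<in> Z}"

lemma open_map_snd_dense_fibres:
  assumes dense: "\<And>y. y \<in> topspace Y \<Longrightarrow> X closure_of fibre_over Z y = topspace X"
  shows "open_map (subtopology (prod_topology X Y) Z) Y snd"
  unfolding open_map_def
proof (intro allI impI)
  fix U assume "openin (subtopology (prod_topology X Y) Z) U"
  then obtain W where W: "openin (prod_topology X Y) W" and U: "U = W \<inter> Z"
    by (auto simp: openin_subtopology)
  show "openin Y (snd ` U)"
  proof (subst openin_subopen, intro ballI)
    fix y assume "y \<in> snd ` U"
    then obtain x where "(x, y) \<in> W" "(x, y) \<in> Z"
      using U by force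
    then obtain A B where AB: "openin X A" "openin Y B" "x \<in> A" "y \<in> B" "A \<times> B \<subseteq> W"
      using W unfolding openin_prod_topology_alt by blast
    have "B \<subseteq> snd ` U"
    proof
      fix v assume v: "v \<in> B"
      then have "v \<in> topspace Y"
        using AB(2) openin_subset by blast
      then have "\<forall>T. openin X T \<and> T \<noteq> {} \<longrightarrow> fibre_over Z v \<inter> T \<noteq> {}"
        using dense dense_intersects_open by metis
      then have "fibre_over Z v \<inter> A \<noteq> {}"
        using AB(1,3) by blast
      then obtain a where "a \<in> A" "(a, v) \<in> Z"
        by (auto simp: fibre_over_def)
      then have "(a, v) \<in> U"
        using U AB(5) v by auto
      then show "v \<in> snd ` U"
        by (metis image_eqI snd_conv)
    qed
    then show "\<exists>T. openin Y T \<and> y \<in> T \<and> T \<subseteq> snd ` U"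
      using AB by blast
  qed
qed

lemma snd_image_dense_fibres:
  assumes "topspace X \<noteq> {}"
    and dense: "\<And>y. y \<in> topspace Y \<Longrightarrow> X closure_of fibre_over Z y = topspace X"
  shows "topspace Y \<subseteq> snd ` Z"
proof
  fix y assume "y \<in> topspace Y"
  then have "X closure_of fibre_over Z y \<noteq> {}"
    using assms(1) dense by simp
  then have "fibre_over Z y \<noteq> {}"
    by (metis closure_of_empty)
  then obtain x where "(x, y) \<in> Z"
    by (auto simp: fibre_over_def)
  then show "y \<in> snd ` Z"
    by (metis image_eqI snd_conv)
qed

lemma fibre_over_interleaved:
  assumes "P \<inter> Q = {}"
  shows "y \<in> P \<Longrightarrow> fibre_over ((S \<times> P) \<union> (D \<times> Q)) y = S"
    and "y \<in> Q \<Longrightarrow> fibre_over ((S \<times> P) \<union> (D \<times> Q)) y = D"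
  using assms by (auto simp: fibre_over_def)

theorem mainTheorem9:
  fixes X :: "'a topology" and Y :: "'b topology"
    and S D :: "'a set" and P Q :: "'b set"
  assumes "metrizable_space X" and "metrizable_space Y"
    and "topspace X \<noteq> {}"
    and "S \<union> D = topspace X" and "S \<inter> D = {}"
    and "X closure_of S = topspace X" and "X closure_of D = topspace X"
    and "P \<union> Q = topspace Y" and "P \<inter> Q = {}"
    and "Y closure_of P = topspace Y" and "Y closure_of Q = topspace Y"
  shows "continuous_map (subtopology (prod_topology X Y) ((S \<times> P) \<union> (D \<times> Q))) Y snd
       \<and> open_map (subtopology (prod_topology X Y) ((S \<times> P) \<union> (D \<times> Q))) Y snd
       \<and> snd ` ((S \<times> P) \<union> (D \<times> Q)) = topspace Y
       \<and> quotient_map (subtopology (prod_topology X Y) ((S \<times> P) \<union> (D \<times> Q))) Y snd"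
proof -
  define Z where "Z = (S \<times> P) \<union> (D \<times> Q)"
  have Z_sub: "Z \<subseteq> topspace X \<times> topspace Y"
    unfolding Z_def using assms(4,8) by auto
  have dense: "X closure_of fibre_over Z y = topspace X" if "y \<in> topspace Y" for y
  proof -
    have "y \<in> P \<or> y \<in> Q"
      using that assms(8) by blast
    then show ?thesis
      unfolding Z_def using assms(6,7) fibre_over_interleaved[OF assms(9), of y S D] by auto
  qed
  have cont: "continuous_map (subtopology (prod_topology X Y) Z) Y snd"
    by (simp add: continuous_map_from_subtopology continuous_map_snd)
  have opn: "open_map (subtopology (prod_topology X Y) Z) Y snd"
    by (rule open_map_snd_dense_fibres) (rule dense)
  have surj: "snd ` Z = topspace Y"
    using snd_image_dense_fibres[OF assms(3) dense] Z_sub by auto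
  have "quotient_map (subtopology (prod_topology X Y) Z) Y snd"
    using continuous_open_quotient_map[OF cont opn] surj Z_sub by (simp add: Int_absorb1)
  with cont opn surj show ?thesis
    by (simp only: Z_def)
qed

end
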